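(* Let $U>0$. For an integer $L>\frac{8}{U}$ and real $\Lambda$, let $q_\ell(\Lambda)$, $\ell=1,\dots,L$, denote the unique solution $k\in[(\ell-1)\frac{2\pi}{L},\ell\frac{2\pi}{L}]$ of $\sin k - \Lambda = \frac{U}{4}\cot\left(\frac{kL}{2}\right)$, and for integers $\ell,m$ with $\frac{L}{2}\le m-\ell\le \frac{3L}{2}-1$ let $\xi_{\ell,m}(\Lambda)$ denote the unique positive solution $\xi$ of $$\cos\left(m\frac{\pi}{L} - \frac{q_\ell(\Lambda)}{2}\right)\sinh(\xi) = -\frac{U}{4}\,\frac{\sinh(\xi L)}{\cosh(\xi L) - (-1)^m\cos\left(q_\ell(\Lambda)L/2\right)}.$$ For every integer $L>\frac{8}{U}$ choose integers $\ell_L\in\{1,\dots,L\}$ and $m_L$ with $\frac{L}{2}\le m_L-\ell_L\le\frac{3L}{2}-1$, such that $\lim_{L\to\infty}(m_L-\ell_L)\frac{\pi}{L} = q$ with $\frac{\pi}{2}<q<\frac{3\pi}{2}$. Then $$\lim_{L\to\infty}\xi_{\ell_L,m_L}(\Lambda) = -\operatorname{arsinh}\left(\frac{U}{4\cos(q)}\right)$$ uniformly in $\Lambda\in\mathbb{R}$.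
   Context: This concerns $N=3$ electrons and one down spin on a lattice of length $L$: solutions of the Lieb-Wu equations $e^{ik_jL} = \frac{\Lambda-\sin k_j - iU/4}{\Lambda - \sin k_j + iU/4}$ ($j=1,2,3$), $\prod_j \frac{\Lambda-\sin k_j - iU/4}{\Lambda - \sin k_j + iU/4}=1$, consisting of a $k$-$\Lambda$ two-string $k_{1,2} = q\mp i\xi$ ($\xi>0$) and a real $k_3 = q_\ell(\Lambda)$, where the total momentum condition gives $q = m\frac{\pi}{L} - \frac{q_\ell(\Lambda)}{2}$ and $\xi=\xi_{\ell,m}(\Lambda)$. Under $U>0$, $L>8/U$ and $\frac{L}{2}\le m-\ell\le\frac{3L}{2}-1$ the displayed equation has a unique positive solution for every real $\Lambda$. The result says that these strings are driven to the ideal string positions $\sinh\xi = -U/(4\cos q)$ as $L\to\infty$. *)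

theory Defs
  imports "HOL-Analysis.Analysis"
begin

text \<open>The endpoints are excluded since cot is
  singular there (in Isabelle cot at a pole would evaluate to 0).\<close>
definition qell :: "real \<Rightarrow> nat \<Rightarrow> int \<Rightarrow> real \<Rightarrow> real" where
  "qell U L l \<Lambda> = (THE k. (real_of_int l - 1) * (2 * pi / real L) < k
      \<and> k < real_of_int l * (2 * pi / real L)
      \<and> sin k - \<Lambda> = U / 4 * cot (k * real L / 2))"

definition xi :: "real \<Rightarrow> nat \<Rightarrow> int \<Rightarrow> int \<Rightarrow> real \<Rightarrow> real" where
  "xi U L l m \<Lambda> = (THE \<xi>. \<xi> > 0 \<and>
      cos (real_of_int m * pi / real L - qell U L l \<Lambda> / 2) * sinh \<xi>
        = - (U / 4) * sinh (\<xi> * real L)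
          / (cosh (\<xi> * real L) - (-1::real) powi m * cos (qell U L l \<Lambda> * real L / 2)))"

end

theory Submission
  imports Defs
begin

text \<open>
  With c = cos (m \<pi>/L - q_l/2) and d = (-1)^m cos (q_l L/2), the string
  equation says sinhL L d \<xi> = -U/(4c), where
  sinhL L d t = sinh t (cosh (tL) - d) / sinh (tL).
  For |d| \<le> 1 this function is strictly increasing in t > 0 and lies between
  sinh t (1 - 1/(tL)) and sinh t (1 + 2/(tL)), so as L \<rightarrow> \<infinity> it approaches sinh t
  uniformly in d, and its inverse approaches arsinh.  Since q_l lies in an interval of
  length 2\<pi>/L, c is within \<pi>/L of cos ((m - l)\<pi>/L) \<rightarrow> cos q < 0, uniformly in \<Lambda>.
\<close>

lemma x_le_sinh_real: "0 \<le> (x::real) \<Longrightarrow> x \<le> sinh x"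
  using real_le_x_sinh[of x] by (simp add: sinh_field_def exp_minus)

lemma sinh_less_mult_cosh_real:
  assumes "0 < (x::real)" shows "sinh x < x * cosh x"
proof -
  have "(\<lambda>t. t * cosh t - sinh t) 0 < (\<lambda>t. t * cosh t - sinh t) x"
  proof (rule DERIV_pos_imp_increasing_open[OF assms])
    fix t :: real assume "0 < t"
    then show "\<exists>y. ((\<lambda>t. t * cosh t - sinh t) has_real_derivative y) (at t) \<and> 0 < y"
      by (intro exI[of _ "t * sinh t"]) (auto intro!: derivative_eq_intros)
  qed (auto intro!: continuous_intros)
  then show ?thesis by simp
qed

lemma of_nat_mult_sinh_le: "0 \<le> (x::real) \<Longrightarrow> real n * sinh x \<le> sinh (real n * x)"
proof (induction n)
  case (Suc n)
  have "sinh (real n * x) * 1 \<le> sinh (real n * x) * cosh x"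
    using Suc.prems cosh_real_ge_1[of x] by (intro mult_left_mono) auto
  moreover have "1 * sinh x \<le> cosh (real n * x) * sinh x"
    using Suc.prems cosh_real_ge_1[of "real n * x"] by (intro mult_right_mono) auto
  moreover have "sinh (real (Suc n) * x) = sinh (real n * x) * cosh x + cosh (real n * x) * sinh x"
    by (simp add: distrib_right sinh_add)
  ultimately show ?case
    using Suc by (simp add: distrib_right)
qed simp

lemma abs_cos_diff_le: "\<bar>cos (x::real) - cos y\<bar> \<le> \<bar>x - y\<bar>"
proof -
  have "\<bar>cos x - cos y\<bar> = 2 * \<bar>sin ((x + y) / 2)\<bar> * \<bar>sin ((y - x) / 2)\<bar>"
    by (simp add: cos_diff_cos abs_mult)
  also have "\<dots> \<le> 2 * 1 * \<bar>(y - x) / 2\<bar>"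
    by (intro mult_mono abs_sin_x_le_abs_x) auto
  finally show ?thesis by simp
qed

lemma uniform_limit_near_tendsto:
  fixes f :: "'n \<Rightarrow> 'a \<Rightarrow> real"
  assumes "(g \<longlongrightarrow> l) F" "(h \<longlongrightarrow> 0) F" "\<forall>\<^sub>F n in F. \<forall>x\<in>S. \<bar>f n x - g n\<bar> \<le> h n"
  shows "uniform_limit S f (\<lambda>_. l) F"
proof (rule uniform_limitI)
  fix e :: real assume "0 < e"
  then have "0 < e / 2" by simp
  from tendstoD[OF assms(1) this] tendstoD[OF assms(2) this] assms(3)
  show "\<forall>\<^sub>F n in F. \<forall>x\<in>S. dist (f n x) l < e"
  proof eventually_elim
    case (elim n)
    show ?case
    proof
      fix x assume "x \<in> S"
      then have "\<bar>f n x - g n\<bar> \<le> h n" using elim(3) by blast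
      with elim(1,2) show "dist (f n x) l < e" unfolding dist_real_def by linarith
    qed
  qed
qed

definition sinhL :: "real \<Rightarrow> real \<Rightarrow> real \<Rightarrow> real" where
  "sinhL L d t = sinh t * (cosh (t * L) - d) / sinh (t * L)"

lemma sinhL_deriv_numerator_pos:
  fixes L d t :: real
  assumes "0 < L" "\<bar>d\<bar> \<le> 1" "0 < t"
  shows "0 < cosh t * sinh (t * L) * (cosh (t * L) - d) + L * sinh t * (d * cosh (t * L) - 1)"
proof -
  define x where "x = t * L"
  have x: "0 < x" using assms by (simp add: x_def)
  have "cosh x > 1" using x cosh_real_ge_1[of x] cosh_real_one_iff[of x] by linarith
  then have pos: "0 < cosh t * sinh x * (cosh x - d)" using x assms(2) by simp
  show ?thesis
  proof (cases "d * cosh x \<ge> 1")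
    case True
    then have "0 \<le> L * sinh t * (d * cosh x - 1)" using assms by simp
    then show ?thesis using pos by (simp add: x_def)
  next
    case False
    \<comment> \<open>bound L sinh t by x cosh t and d by -1; what remains is (sinh x - x)(cosh x + 1) \<ge> 0\<close>
    have "L * (t * cosh t) * (d * cosh x - 1) < L * sinh t * (d * cosh x - 1)"
      using False assms sinh_less_mult_cosh_real[of t]
      by (intro mult_strict_right_mono_neg mult_strict_left_mono) auto
    then have less: "x * cosh t * (d * cosh x - 1) < L * sinh t * (d * cosh x - 1)"
      by (simp add: x_def ac_simps)
    have "-1 * (x * cosh x - sinh x) \<le> d * (x * cosh x - sinh x)"
      using sinh_less_mult_cosh_real[OF x] assms(2) by (intro mult_right_mono) auto
    moreover have "0 \<le> (sinh x - x) * (cosh x + 1)"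
      using x_le_sinh_real[of x] x by simp
    ultimately have "0 \<le> sinh x * (cosh x - d) + x * (d * cosh x - 1)"
      by (simp add: algebra_simps)
    then have "0 \<le> cosh t * (sinh x * (cosh x - d) + x * (d * cosh x - 1))"
      by simp
    then show ?thesis using less by (simp add: x_def algebra_simps)
  qed
qed

lemma sinhL_has_derivative:
  fixes L d t :: real
  assumes "0 < L" "0 < t"
  shows "(sinhL L d has_real_derivative
     (cosh t * sinh (t * L) * (cosh (t * L) - d) + L * sinh t * (d * cosh (t * L) - 1))
       / (sinh (t * L))\<^sup>2) (at t)"
proof -
  have "sinh (t * L) \<noteq> 0" using assms by simp
  then have "(sinhL L d has_real_derivative
     ((cosh t * (cosh (t * L) - d) + sinh t * (sinh (t * L) * L)) * sinh (t * L)
        - sinh t * (cosh (t * L) - d) * (cosh (t * L) * L)) / (sinh (t * L))\<^sup>2) (at t)"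
    unfolding sinhL_def[abs_def] by (auto intro!: derivative_eq_intros simp: power2_eq_square)
  moreover have "(cosh t * (cosh (t * L) - d) + sinh t * (sinh (t * L) * L)) * sinh (t * L)
        - sinh t * (cosh (t * L) - d) * (cosh (t * L) * L)
      = cosh t * sinh (t * L) * (cosh (t * L) - d) + L * sinh t * (d * cosh (t * L) - 1)"
    using cosh_square_eq[of "t * L"] by (simp add: algebra_simps power2_eq_square)
  ultimately show ?thesis by simp
qed

lemma sinhL_strict_mono:
  fixes L d a b :: real
  assumes "0 < L" "\<bar>d\<bar> \<le> 1" "0 < a" "a < b"
  shows "sinhL L d a < sinhL L d b"
proof (rule DERIV_pos_imp_increasing[OF \<open>a < b\<close>])
  fix t assume "a \<le> t" "t \<le> b"
  then have "0 < t" using assms by simp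
  then have "0 < (sinh (t * L))\<^sup>2" using assms by simp
  then show "\<exists>D. (sinhL L d has_real_derivative D) (at t) \<and> 0 < D"
    using sinhL_has_derivative[OF assms(1) \<open>0 < t\<close>]
      divide_pos_pos[OF sinhL_deriv_numerator_pos[OF assms(1,2) \<open>0 < t\<close>]] by blast
qed

lemma sinhL_less_iff:
  fixes L d a b :: real
  assumes "0 < L" "\<bar>d\<bar> \<le> 1" "0 < a" "0 < b"
  shows "sinhL L d a < sinhL L d b \<longleftrightarrow> a < b"
  using sinhL_strict_mono[OF assms(1,2)] assms(3,4) by (metis linorder_neq_iff order_less_asym)

lemma isCont_sinhL: "0 < L \<Longrightarrow> 0 < t \<Longrightarrow> isCont (sinhL L d) t"
  using sinhL_has_derivative DERIV_isCont by blast

lemma sinhL_le: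
  fixes L d t :: real
  assumes "0 < L" "0 < t" "-1 \<le> d"
  shows "sinhL L d t \<le> sinh t * (1 + 2 / (t * L))"
proof -
  define x where "x = t * L"
  have x: "0 < x" using assms by (simp add: x_def)
  have "cosh x - sinh x \<le> 1" using x by (simp add: cosh_minus_sinh)
  then have "(cosh x - d) / sinh x \<le> (sinh x + 2) / sinh x"
    using x assms(3) by (intro divide_right_mono) auto
  also have "\<dots> = 1 + 2 / sinh x" using x by (simp add: field_simps)
  also have "\<dots> \<le> 1 + 2 / x" using x_le_sinh_real[of x] x by (simp add: frac_le)
  finally have "sinh t * ((cosh x - d) / sinh x) \<le> sinh t * (1 + 2 / x)"
    using assms by (intro mult_left_mono) auto
  then show ?thesis by (simp add: sinhL_def x_def)
qed

lemma sinhL_ge: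
  fixes L d t :: real
  assumes "0 < L" "0 < t" "d \<le> 1"
  shows "sinh t * (1 - 1 / (t * L)) \<le> sinhL L d t"
proof -
  define x where "x = t * L"
  have x: "0 < x" using assms by (simp add: x_def)
  have "1 - 1 / x \<le> 1 - 1 / sinh x" using x_le_sinh_real[of x] x by (simp add: frac_le)
  also have "\<dots> = (sinh x - 1) / sinh x" using x by (simp add: field_simps)
  also have "\<dots> \<le> (cosh x - d) / sinh x"
    using x assms(3) sinh_le_cosh_real[of x] by (intro divide_right_mono) auto
  finally have "sinh t * (1 - 1 / x) \<le> sinh t * ((cosh x - d) / sinh x)"
    using assms by (intro mult_left_mono) auto
  then show ?thesis by (simp add: sinhL_def x_def)
qed

lemma sinhL_le_of_nat:
  fixes d t :: real
  assumes "0 < n" "0 < t" "\<bar>d\<bar> \<le> 1"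
  shows "sinhL (real n) d t \<le> (cosh (t * real n) + 1) / real n"
proof -
  have pos: "0 < sinh (t * real n)" using assms by simp
  have "real n * sinh t \<le> sinh (t * real n)"
    using of_nat_mult_sinh_le[of t n] assms by (simp add: mult.commute)
  then have "sinh t / sinh (t * real n) \<le> 1 / real n"
    using pos assms by (simp add: field_simps)
  then have "sinh t / sinh (t * real n) * (cosh (t * real n) - d) \<le> 1 / real n * (cosh (t * real n) + 1)"
    using assms pos cosh_real_ge_1[of "t * real n"] by (intro mult_mono) auto
  then show ?thesis by (simp add: sinhL_def)
qed

lemma sinhL_eq_ex1:
  fixes d K :: real
  assumes "0 < n" "\<bar>d\<bar> \<le> 1" "2 < K * real n"
  shows "\<exists>!t. 0 < t \<and> sinhL (real n) d t = K"
proof -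
  have n: "0 < real n" using assms by simp
  define y where "y = ln (K * real n - 1)"
  have y: "0 < y" "exp y = K * real n - 1" using assms by (simp_all add: y_def)
  have "exp (- y) < exp y" using \<open>0 < y\<close> by simp
  then have "cosh y < exp y" by (simp add: cosh_def)
  define t0 where "t0 = y / real n"
  have t0: "0 < t0" "t0 * real n = y" using y n by (simp_all add: t0_def)
  have "sinhL (real n) d t0 \<le> (cosh y + 1) / real n"
    using sinhL_le_of_nat[OF assms(1) t0(1) assms(2)] t0 by simp
  also have "\<dots> < K"
    using \<open>cosh y < exp y\<close> y n by (simp add: field_simps)
  finally have below: "sinhL (real n) d t0 < K" .
  define t1 where "t1 = arsinh (2 * K) + 2"
  have "0 < K * real n" using assms by linarith
  then have "0 < K" using n by (simp add: zero_less_mult_iff)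
  then have "0 < arsinh (2 * K)" using arsinh_real_strict_mono[of 0 "2 * K"] by simp
  then have t1: "2 < t1" by (simp add: t1_def)
  have "sinh (arsinh (2 * K)) < sinh t1" unfolding sinh_real_less_iff by (simp add: t1_def)
  then have "K < sinh t1 * (1 / 2)" by simp
  also have "\<dots> \<le> sinh t1 * (1 - 1 / (t1 * real n))"
  proof -
    have "2 * 1 \<le> t1 * real n" using t1 assms(1) by (intro mult_mono) auto
    then show ?thesis using t1 by (intro mult_left_mono) (auto simp: field_simps)
  qed
  also have "\<dots> \<le> sinhL (real n) d t1" using sinhL_ge[OF n] t1 assms(2) by simp
  finally have above: "K < sinhL (real n) d t1" .
  have "t0 < t1" using below above sinhL_less_iff[OF n assms(2) t0(1), of t1] t1 by simp
  then obtain t where "t0 \<le> t" "sinhL (real n) d t = K"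
    using IVT[of "sinhL (real n) d" t0 K t1] below above isCont_sinhL[OF n] t0 by force
  moreover have "s = t" if "0 < s" "0 < t" "sinhL (real n) d s = sinhL (real n) d t" for s t
    using that sinhL_less_iff[OF n assms(2)] by (metis linorder_neq_iff order_less_irrefl)
  ultimately show ?thesis using t0 by (intro ex1I[of _ t]) auto
qed

lemma sinhL_solution_near_arsinh:
  fixes k e :: real
  assumes "0 < k" "0 < e"
  obtains \<delta> N where "0 < \<delta>"
    "\<And>L d t. N < L \<Longrightarrow> \<bar>d\<bar> \<le> 1 \<Longrightarrow> 0 < t \<Longrightarrow> \<bar>sinhL L d t - k\<bar> < \<delta> \<Longrightarrow> \<bar>t - arsinh k\<bar> < e"
proof -
  define s where "s = arsinh k"
  have s: "0 < s" "sinh s = k" using assms arsinh_real_strict_mono[of 0 k] by (simp_all add: s_def)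
  define lo where "lo = s - min e s / 2"
  define hi where "hi = s + e / 2"
  have lo: "0 < lo" "lo < s" "s - lo < e" and hi: "s < hi" "hi - s < e"
    using s assms by (auto simp: lo_def hi_def)
  define \<delta>1 where "\<delta>1 = (k - sinh lo) / 2"
  define \<delta>2 where "\<delta>2 = (sinh hi - k) / 2"
  have "sinh lo < sinh s" "sinh s < sinh hi" using lo hi by simp_all
  then have \<delta>12: "0 < \<delta>1" "0 < \<delta>2" using s by (simp_all add: \<delta>1_def \<delta>2_def)
  define N where "N = max (2 * sinh lo / (lo * \<delta>1)) (sinh hi / (hi * \<delta>2))"
  show ?thesis
  proof
    show "0 < min \<delta>1 \<delta>2" using \<delta>12 by simp
    fix L d t
    assume L: "N < L" and d: "\<bar>d\<bar> \<le> 1" and t: "0 < t" and close: "\<bar>sinhL L d t - k\<bar> < min \<delta>1 \<delta>2"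
    have L_lo: "2 * sinh lo / (lo * \<delta>1) < L" and L_hi: "sinh hi / (hi * \<delta>2) < L"
      using L by (simp_all add: N_def)
    have window: "k - \<delta>1 < sinhL L d t" "sinhL L d t < k + \<delta>2" using close by auto
    have "0 < 2 * sinh lo / (lo * \<delta>1)" using lo \<delta>12 by simp
    then have "0 < L" using L_lo by linarith
    have "sinhL L d lo \<le> sinh lo + 2 * sinh lo / (lo * L)"
      using sinhL_le[OF \<open>0 < L\<close> lo(1), of d] d by (simp add: algebra_simps)
    moreover have "2 * sinh lo / (lo * L) < \<delta>1"
      using L_lo lo \<delta>12 \<open>0 < L\<close> by (simp add: field_simps)
    ultimately have "sinhL L d lo < sinhL L d t"
      using window unfolding \<delta>1_def by argo
    then have "lo < t" using sinhL_less_iff[OF \<open>0 < L\<close> d lo(1) t] by simp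
    have "sinh hi / (hi * L) < \<delta>2"
      using L_hi hi s \<delta>12 \<open>0 < L\<close> by (simp add: field_simps)
    then have "sinhL L d t < sinh hi - sinh hi / (hi * L)"
      using window unfolding \<delta>2_def by argo
    also have "\<dots> \<le> sinhL L d hi"
      using sinhL_ge[OF \<open>0 < L\<close>, of hi d] hi s d by (simp add: algebra_simps)
    finally have "t < hi" using sinhL_less_iff[OF \<open>0 < L\<close> d t] hi s by simp
    with \<open>lo < t\<close> lo hi show "\<bar>t - arsinh k\<bar> < e" by (simp add: s_def)
  qed
qed

lemma uniform_limit_sinhL_solution:
  fixes t d K :: "nat \<Rightarrow> 'a \<Rightarrow> real"
  assumes "uniform_limit S K (\<lambda>_. k) sequentially" "0 < k"
    and "\<forall>\<^sub>F n in sequentially. \<forall>x\<in>S. \<bar>d n x\<bar> \<le> 1 \<and> 0 < t n x \<and> sinhL (real n) (d n x) (t n x) = K n x"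
  shows "uniform_limit S t (\<lambda>_. arsinh k) sequentially"
proof (rule uniform_limitI)
  fix e :: real assume "0 < e"
  obtain \<delta> N where "0 < \<delta>" and near:
    "\<And>L d t. N < L \<Longrightarrow> \<bar>d\<bar> \<le> 1 \<Longrightarrow> 0 < t \<Longrightarrow> \<bar>sinhL L d t - k\<bar> < \<delta> \<Longrightarrow> \<bar>t - arsinh k\<bar> < e"
    using sinhL_solution_near_arsinh[OF \<open>0 < k\<close> \<open>0 < e\<close>] by blast
  have "\<forall>\<^sub>F n in sequentially. N < real n"
    by (rule eventually_compose_filterlim[OF eventually_gt_at_top filterlim_real_sequentially])
  with uniform_limitD[OF assms(1) \<open>0 < \<delta>\<close>] assms(3)
  show "\<forall>\<^sub>F n in sequentially. \<forall>x\<in>S. dist (t n x) (arsinh k) < e"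
    by eventually_elim (use near in \<open>auto simp: dist_real_def\<close>)
qed

lemma sin_half_mult_ne_zero:
  fixes L k :: real and l :: int
  assumes "0 < L" "(of_int l - 1) * (2 * pi / L) < k" "k < of_int l * (2 * pi / L)"
  shows "sin (k * L / 2) \<noteq> 0"
proof
  assume "sin (k * L / 2) = 0"
  then obtain i :: int where i: "k * L / 2 = of_int i * pi" using sin_zero_iff_int2 by blast
  have "(of_int l - 1) * pi < k * L / 2" "k * L / 2 < of_int l * pi"
    using assms by (simp_all add: field_simps)
  then have "of_int l - 1 < (of_int i :: real)" "of_int i < (of_int l :: real)"
    unfolding i by simp_all
  then have "l - 1 < i" "i < l" by linarith+
  then show False by linarith
qed

lemma cot_equation_strict_antimono:
  fixes U L x y :: real and l :: int
  assumes "0 < L" "8 < U * L"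
    and "(of_int l - 1) * (2 * pi / L) < x" "x < y" "y < of_int l * (2 * pi / L)"
  shows "U / 4 * cot (y * L / 2) - sin y < U / 4 * cot (x * L / 2) - sin x"
proof (rule DERIV_neg_imp_decreasing[OF \<open>x < y\<close>])
  fix k assume "x \<le> k" "k \<le> y"
  then have "(of_int l - 1) * (2 * pi / L) < k" "k < of_int l * (2 * pi / L)"
    using assms by linarith+
  then have sin_ne: "sin (k * L / 2) \<noteq> 0" using sin_half_mult_ne_zero[OF \<open>0 < L\<close>] by blast
  have "1 \<le> inverse ((sin (k * L / 2))\<^sup>2)"
    using sin_ne by (simp add: one_le_inverse abs_square_le_1)
  then have "U * L / 8 * 1 \<le> U * L / 8 * inverse ((sin (k * L / 2))\<^sup>2)"
    using assms by (intro mult_left_mono) auto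
  then have "1 < U * L / 8 * inverse ((sin (k * L / 2))\<^sup>2)" using assms by linarith
  moreover have "U / 4 * (- inverse ((sin (k * L / 2))\<^sup>2) * (L / 2))
      = - (U * L / 8 * inverse ((sin (k * L / 2))\<^sup>2))" by simp
  ultimately have "U / 4 * (- inverse ((sin (k * L / 2))\<^sup>2) * (L / 2)) - cos k < 0"
    using cos_ge_minus_one[of k] by linarith
  moreover have "((\<lambda>k. U / 4 * cot (k * L / 2) - sin k) has_real_derivative
      U / 4 * (- inverse ((sin (k * L / 2))\<^sup>2) * (L / 2)) - cos k) (at k)"
    by (rule derivative_eq_intros DERIV_cot[THEN DERIV_chain2] refl sin_ne | simp)+
  ultimately show "\<exists>D. ((\<lambda>k. U / 4 * cot (k * L / 2) - sin k) has_real_derivative D) (at k) \<and> D < 0"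
    by blast
qed

lemma cot_equation_has_root:
  fixes U L \<Lambda> :: real and l :: int
  assumes "0 < U" "0 < L"
  shows "\<exists>k. (of_int l - 1) * (2 * pi / L) < k \<and> k < of_int l * (2 * pi / L)
    \<and> sin k - \<Lambda> = U / 4 * cot (k * L / 2)"
proof -
  define a where "a = (of_int l - 1) * (2 * pi / L)"
  define b where "b = of_int l * (2 * pi / L)"
  define F where "F = (\<lambda>k. U / 4 * cot (k * L / 2) - sin k + \<Lambda>)"
  define M where "M = 4 * (1 + \<bar>\<Lambda>\<bar>) / U + 1"
  have M: "0 < M" "U / 4 * M = 1 + \<bar>\<Lambda>\<bar> + U / 4" using assms by (simp_all add: M_def field_simps)
  define t where "t = arctan (1 / M)"
  have t: "0 < t" "t < pi / 2" "cot t = M"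
    using M arctan_ubound[of "1 / M"] by (simp_all add: t_def cot_altdef tan_arctan)
  define k1 where "k1 = a + 2 * t / L"
  define k2 where "k2 = b - 2 * t / L"
  have k12: "a < k1" "k1 < k2" "k2 < b"
    using t assms by (simp_all add: k1_def k2_def a_def b_def field_simps)
  \<comment> \<open>at k1 and k2 the cot term is \<plusminus>(1 + |\<Lambda>| + U/4), which dominates sin k - \<Lambda>\<close>
  have "k1 * L / 2 = t + of_int (l - 1) * pi" "k2 * L / 2 = - t + of_int l * pi"
    using assms by (simp_all add: k1_def k2_def a_def b_def field_simps)
  then have "cot (k1 * L / 2) = M" "cot (k2 * L / 2) = - M"
    using t by (simp_all only: cot_altdef tan_periodic_int tan_minus inverse_minus_eq)
  then have "F k1 = U / 4 * M - sin k1 + \<Lambda>" "F k2 = - (U / 4 * M) - sin k2 + \<Lambda>"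
    by (simp_all add: F_def)
  then have "F k2 < 0" "0 < F k1"
    using M(2) assms sin_le_one[of k1] sin_ge_minus_one[of k2] abs_ge_self[of \<Lambda>]
      abs_ge_minus_self[of \<Lambda>] by linarith+
  moreover have "isCont F k" if "k1 \<le> k" "k \<le> k2" for k
    using that k12 assms sin_half_mult_ne_zero[of L l k]
    by (auto simp: F_def a_def b_def intro!: continuous_intros)
  ultimately obtain k where "k1 \<le> k" "k \<le> k2" "F k = 0"
    using IVT2[of F k2 0 k1] k12 by force
  then show ?thesis using k12 by (intro exI[of _ k]) (auto simp: F_def a_def b_def)
qed

lemma qell_bounds:
  fixes U \<Lambda> :: real and L :: nat and l :: int
  assumes "0 < U" "8 / U < real L"
  shows "(of_int l - 1) * (2 * pi / real L) < qell U L l \<Lambda>"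
    and "qell U L l \<Lambda> < of_int l * (2 * pi / real L)"
proof -
  have "0 < 8 / U" using assms by simp
  then have L: "0 < real L" using assms by linarith
  have "8 < U * real L" using assms by (simp add: field_simps)
  have "\<exists>!k. (of_int l - 1) * (2 * pi / real L) < k \<and> k < of_int l * (2 * pi / real L)
      \<and> sin k - \<Lambda> = U / 4 * cot (k * real L / 2)"
  proof (rule ex_ex1I[OF cot_equation_has_root[OF assms(1) L]], elim conjE)
    fix x y assume "sin x - \<Lambda> = U / 4 * cot (x * real L / 2)" "sin y - \<Lambda> = U / 4 * cot (y * real L / 2)"
      and "(of_int l - 1) * (2 * pi / real L) < x" "x < of_int l * (2 * pi / real L)"
      and "(of_int l - 1) * (2 * pi / real L) < y" "y < of_int l * (2 * pi / real L)"
    then show "x = y"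
      using cot_equation_strict_antimono[OF L \<open>8 < U * real L\<close>, of l x y]
        cot_equation_strict_antimono[OF L \<open>8 < U * real L\<close>, of l y x]
      by (cases x y rule: linorder_cases) auto
  qed
  from theI'[OF this] show "(of_int l - 1) * (2 * pi / real L) < qell U L l \<Lambda>"
    and "qell U L l \<Lambda> < of_int l * (2 * pi / real L)"
    unfolding qell_def by auto
qed

lemma string_cos_bounds:
  fixes U \<Lambda> :: real and L :: nat and l m :: int
  assumes "0 < U" "8 / U < real L"
    and "real L / 2 \<le> of_int (m - l)" "of_int (m - l) \<le> 3 * real L / 2 - 1"
  shows "cos (of_int m * pi / real L - qell U L l \<Lambda> / 2) < 0"
    and "\<bar>cos (of_int m * pi / real L - qell U L l \<Lambda> / 2) - cos (of_int (m - l) * pi / real L)\<bar>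
           \<le> pi / real L"
proof -
  have "0 < 8 / U" using assms by simp
  then have L: "0 < real L" using assms by linarith
  define \<theta> where "\<theta> = of_int m * pi / real L - qell U L l \<Lambda> / 2"
  have "(of_int l - 1) * pi / real L < qell U L l \<Lambda> / 2" "qell U L l \<Lambda> / 2 < of_int l * pi / real L"
    using qell_bounds[OF assms(1,2), of l \<Lambda>] by (simp_all add: field_simps)
  moreover have "of_int (m - l) * pi / real L = of_int m * pi / real L - of_int l * pi / real L"
    "(of_int l - 1) * pi / real L = of_int l * pi / real L - pi / real L"
    by (simp_all add: left_diff_distrib diff_divide_distrib)
  ultimately have "of_int (m - l) * pi / real L < \<theta>" "\<theta> < of_int (m - l) * pi / real L + pi / real L"
    unfolding \<theta>_def by linarith+
  moreover have "pi / 2 \<le> of_int (m - l) * pi / real L" "of_int (m - l) * pi / real L + pi / real L \<le> 3 * pi / 2"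
    using mult_right_mono[OF assms(3) pi_ge_zero] mult_right_mono[OF assms(4) pi_ge_zero] L
    by (simp_all add: field_simps)
  ultimately have "pi / 2 < \<theta>" "\<theta> < 3 * pi / 2"
    and "\<bar>\<theta> - of_int (m - l) * pi / real L\<bar> \<le> pi / real L"
    by linarith+
  then show "cos \<theta> < 0" "\<bar>cos \<theta> - cos (of_int (m - l) * pi / real L)\<bar> \<le> pi / real L"
    using cos_lt_zero_pi abs_cos_diff_le[of \<theta> "of_int (m - l) * pi / real L"] by auto
qed

lemma xi_solves_sinhL_equation:
  fixes U \<Lambda> :: real and L :: nat and l m :: int
  assumes "0 < U" "8 / U < real L"
    and "real L / 2 \<le> of_int (m - l)" "of_int (m - l) \<le> 3 * real L / 2 - 1"
  defines "c \<equiv> cos (of_int m * pi / real L - qell U L l \<Lambda> / 2)"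
    and "d \<equiv> (-1::real) powi m * cos (qell U L l \<Lambda> * real L / 2)"
  shows "0 < xi U L l m \<Lambda> \<and> sinhL (real L) d (xi U L l m \<Lambda>) = - U / (4 * c)"
proof -
  have "0 < 8 / U" using assms by simp
  then have L: "0 < real L" using assms by linarith
  have c: "c < 0" "-1 \<le> c" using string_cos_bounds(1)[OF assms(1-4)] by (simp_all add: c_def)
  have d: "\<bar>d\<bar> \<le> 1" by (simp add: d_def abs_mult)
  then have "d \<le> 1" by linarith
  have "U * -1 \<le> U * c" using c assms(1) by (intro mult_left_mono) auto
  then have "U / 4 \<le> - U / (4 * c)" using c by (simp add: field_simps)
  then have "U / 4 * real L \<le> - U / (4 * c) * real L" using L by (intro mult_right_mono) auto
  moreover have "2 < U / 4 * real L" using assms by (simp add: field_simps)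
  ultimately have "2 < - U / (4 * c) * real L" by linarith
  then have ex1: "\<exists>!\<xi>. 0 < \<xi> \<and> sinhL (real L) d \<xi> = - U / (4 * c)"
    using sinhL_eq_ex1[OF _ d] L by simp
  have "c * sinh \<xi> = - (U / 4) * sinh (\<xi> * real L) / (cosh (\<xi> * real L) - d)
      \<longleftrightarrow> sinhL (real L) d \<xi> = - U / (4 * c)" if "0 < \<xi>" for \<xi>
  proof -
    have "0 < \<xi> * real L" using that L by simp
    then have "0 < sinh (\<xi> * real L)" "1 < cosh (\<xi> * real L)"
      using cosh_real_strict_mono[of 0 "\<xi> * real L"] by simp_all
    then have "sinh (\<xi> * real L) \<noteq> 0" "cosh (\<xi> * real L) - d \<noteq> 0"
      using \<open>d \<le> 1\<close> by linarith+
    then show ?thesis using c by (auto simp: sinhL_def field_simps)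
  qed
  then have "xi U L l m \<Lambda> = (THE \<xi>. 0 < \<xi> \<and> sinhL (real L) d \<xi> = - U / (4 * c))"
    unfolding xi_def c_def[symmetric] d_def[symmetric] by (metis (lifting))
  with theI'[OF ex1] show ?thesis by simp
qed

theorem mainTheorem6:
  fixes U q :: real and ell m :: "nat \<Rightarrow> int"
  assumes "U > 0"
    and "\<And>L. real L > 8 / U \<Longrightarrow> 1 \<le> ell L \<and> ell L \<le> int L"
    and "\<And>L. real L > 8 / U \<Longrightarrow> real L / 2 \<le> real_of_int (m L - ell L)
                  \<and> real_of_int (m L - ell L) \<le> 3 * real L / 2 - 1"
    and "(\<lambda>L. real_of_int (m L - ell L) * pi / real L) \<longlonglongrightarrow> q"
    and "pi / 2 < q" and "q < 3 * pi / 2"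
  shows "uniform_limit UNIV (\<lambda>L \<Lambda>. xi U L (ell L) (m L) \<Lambda>)
           (\<lambda>\<Lambda>. - arsinh (U / (4 * cos q))) sequentially"
proof -
  define c where "c L \<Lambda> = cos (of_int (m L) * pi / real L - qell U L (ell L) \<Lambda> / 2)" for L \<Lambda>
  define d where "d L \<Lambda> = (-1::real) powi (m L) * cos (qell U L (ell L) \<Lambda> * real L / 2)" for L \<Lambda>
  have large: "\<forall>\<^sub>F L in sequentially. 8 / U < real L"
    by (rule eventually_compose_filterlim[OF eventually_gt_at_top filterlim_real_sequentially])
  have "uniform_limit UNIV c (\<lambda>_. cos q) sequentially"
  proof (rule uniform_limit_near_tendsto)
    show "(\<lambda>L. cos (of_int (m L - ell L) * pi / real L)) \<longlonglongrightarrow> cos q"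
      using assms(4) by (rule tendsto_cos)
    show "\<forall>\<^sub>F L in sequentially. \<forall>\<Lambda>\<in>UNIV. \<bar>c L \<Lambda> - cos (of_int (m L - ell L) * pi / real L)\<bar> \<le> pi / real L"
      using large by eventually_elim (use string_cos_bounds(2) assms(1,3) in \<open>auto simp: c_def\<close>)
  qed (rule lim_const_over_n)
  then have "uniform_limit UNIV (\<lambda>L \<Lambda>. - U / (4 * c L \<Lambda>)) (\<lambda>_. - U / (4 * cos q)) sequentially"
    using cos_lt_zero_pi[OF assms(5,6)]
    by (intro uniform_lim_divide[where b = "- 4 * cos q"] uniform_limit_intros) auto
  moreover have "0 < - U / (4 * cos q)"
    using cos_lt_zero_pi[OF assms(5,6)] assms(1) by (simp add: divide_pos_neg)
  moreover have "\<forall>\<^sub>F L in sequentially. \<forall>\<Lambda>\<in>UNIV. \<bar>d L \<Lambda>\<bar> \<le> 1 \<and> 0 < xi U L (ell L) (m L) \<Lambda>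
      \<and> sinhL (real L) (d L \<Lambda>) (xi U L (ell L) (m L) \<Lambda>) = - U / (4 * c L \<Lambda>)"
    using large by eventually_elim
      (use xi_solves_sinhL_equation assms(1,3) in \<open>auto simp: c_def d_def abs_mult\<close>)
  ultimately have "uniform_limit UNIV (\<lambda>L \<Lambda>. xi U L (ell L) (m L) \<Lambda>)
      (\<lambda>_. arsinh (- U / (4 * cos q))) sequentially"
    by (rule uniform_limit_sinhL_solution)
  then show ?thesis by simp
qed

end
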